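(* For every $d\ge1$, $\mathsf{L}(\mathcal{A}^d)\le10^d$.
   Context: $\mathcal{A}:\{0,1\}^4\to\{0,1\}$ is the function with $\mathcal{A}(x)=1$ iff $x_1\le x_2\le x_3\le x_4$ or $x_1\ge x_2\ge x_3\ge x_4$. For $f:\{0,1\}^n\to\{0,1\}$, its $d$th iteration $f^d:\{0,1\}^{n^d}\to\{0,1\}$ is defined by $f^1=f$ and $f^{d+1}(x)=f\big(f^d(x_1,\dots,x_{n^d}),\ \dots,\ f^d(x_{(n-1)n^d+1},\dots,x_{n^{d+1}})\big)$, the $j$th argument being $f^d$ applied to the $j$th consecutive block of $n^d$ bits. $\mathsf{L}(f)$ is the minimum number of leaves of a formula (binary tree with internal nodes labeled $\wedge,\vee$ and leaves labeled by literals $x_i,\neg x_i$) computing $f$. *)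

theory Defs
  imports Main
begin

text \<open>Boolean functions f : {0,1}^N -> {0,1} are represented as predicates on
  assignments x :: nat => bool, of which only the coordinates 0..N-1 matter
  (coordinate i corresponds to x_(i+1) in the paper).\<close>

datatype formula = Lit nat bool | And formula formula | Or formula formula

fun eval :: "formula \<Rightarrow> (nat \<Rightarrow> bool) \<Rightarrow> bool" where
  "eval (Lit i b) x = (if b then x i else \<not> x i)"
| "eval (And p q) x = (eval p x \<and> eval q x)"
| "eval (Or p q) x = (eval p x \<or> eval q x)"

fun vars :: "formula \<Rightarrow> nat set" where
  "vars (Lit i b) = {i}"
| "vars (And p q) = vars p \<union> vars q"
| "vars (Or p q) = vars p \<union> vars q"

fun leaves :: "formula \<Rightarrow> nat" where
  "leaves (Lit i b) = 1"
| "leaves (And p q) = leaves p + leaves q"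
| "leaves (Or p q) = leaves p + leaves q"

definition computes :: "nat \<Rightarrow> formula \<Rightarrow> ((nat \<Rightarrow> bool) \<Rightarrow> bool) \<Rightarrow> bool" where
  "computes N \<phi> f \<longleftrightarrow> (\<forall>i\<in>vars \<phi>. i < N) \<and> (\<forall>x. eval \<phi> x = f x)"

definition formula_size :: "nat \<Rightarrow> ((nat \<Rightarrow> bool) \<Rightarrow> bool) \<Rightarrow> nat" where
  "formula_size N f = (LEAST s. \<exists>\<phi>. computes N \<phi> f \<and> leaves \<phi> = s)"

definition funA :: "(nat \<Rightarrow> bool) \<Rightarrow> bool" where
  "funA x \<longleftrightarrow> (x 0 \<le> x 1 \<and> x 1 \<le> x 2 \<and> x 2 \<le> x 3) \<or> (x 0 \<ge> x 1 \<and> x 1 \<ge> x 2 \<and> x 2 \<ge> x 3)"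

fun iter :: "((nat \<Rightarrow> bool) \<Rightarrow> bool) \<Rightarrow> nat \<Rightarrow> nat \<Rightarrow> (nat \<Rightarrow> bool) \<Rightarrow> bool" where
  "iter f n (Suc 0) x = f x"
| "iter f n (Suc (Suc d)) x = f (\<lambda>j. iter f n (Suc d) (\<lambda>i. x (j * n ^ Suc d + i)))"
| "iter f n 0 x = undefined"

end

theory Submission
  imports Defs
begin

text \<open>A has a formula with 10 leaves. Plugging a formula for A^d into each positive leaf,
  and its De Morgan dual (which computes the negation with the same number of leaves) into
  each negative leaf, yields a formula for A^(d+1) with 10 times as many leaves.\<close>

fun shift :: "nat \<Rightarrow> formula \<Rightarrow> formula" where
  "shift k (Lit i b) = Lit (k + i) b"
| "shift k (And p q) = And (shift k p) (shift k q)"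
| "shift k (Or p q) = Or (shift k p) (shift k q)"

fun dual :: "formula \<Rightarrow> formula" where
  "dual (Lit i b) = Lit i (\<not> b)"
| "dual (And p q) = Or (dual p) (dual q)"
| "dual (Or p q) = And (dual p) (dual q)"

fun subst :: "(nat \<Rightarrow> bool \<Rightarrow> formula) \<Rightarrow> formula \<Rightarrow> formula" where
  "subst g (Lit i b) = g i b"
| "subst g (And p q) = And (subst g p) (subst g q)"
| "subst g (Or p q) = Or (subst g p) (subst g q)"

lemma eval_shift: "eval (shift k p) x = eval p (\<lambda>i. x (k + i))"
  by (induction p) auto

lemma vars_shift: "vars (shift k p) = (\<lambda>i. k + i) ` vars p"
  by (induction p) auto

lemma leaves_shift: "leaves (shift k p) = leaves p"
  by (induction p) auto

lemma eval_dual: "eval (dual p) x = (\<not> eval p x)"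
  by (induction p) auto

lemma vars_dual: "vars (dual p) = vars p"
  by (induction p) auto

lemma leaves_dual: "leaves (dual p) = leaves p"
  by (induction p) auto

lemma eval_subst:
  assumes "\<And>i. eval (g i False) x = (\<not> eval (g i True) x)"
  shows "eval (subst g p) x = eval p (\<lambda>i. eval (g i True) x)"
proof (induction p)
  case (Lit i b)
  then show ?case using assms by (cases b) auto
qed auto


lemma vars_subst: "vars (subst g p) \<subseteq> (\<Union>i\<in>vars p. \<Union>b. vars (g i b))"
  by (induction p) auto

lemma leaves_subst:
  assumes "\<And>i b. leaves (g i b) = m"
  shows "leaves (subst g p) = m * leaves p"
  using assms by (induction p) (auto simp: algebra_simps)

definition compose :: "nat \<Rightarrow> formula \<Rightarrow> formula \<Rightarrow> formula" where
  "compose N \<psi> \<phi> = subst (\<lambda>j b. shift (j * N) (if b then \<phi> else dual \<phi>)) \<psi>"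

lemma leaves_compose: "leaves (compose N \<psi> \<phi>) = leaves \<phi> * leaves \<psi>"
  unfolding compose_def by (rule leaves_subst) (simp add: leaves_shift leaves_dual)

lemma computes_compose:
  assumes f: "computes n \<psi> f" and g: "computes N \<phi> g"
  shows "computes (n * N) (compose N \<psi> \<phi>) (\<lambda>x. f (\<lambda>j. g (\<lambda>i. x (j * N + i))))"
  unfolding computes_def
proof (intro conjI allI ballI)
  fix x
  have "eval (compose N \<psi> \<phi>) x = eval \<psi> (\<lambda>j. eval \<phi> (\<lambda>i. x (j * N + i)))"
    unfolding compose_def by (subst eval_subst) (simp_all add: eval_dual eval_shift)
  then show "eval (compose N \<psi> \<phi>) x = f (\<lambda>j. g (\<lambda>i. x (j * N + i)))"
    using f g by (simp add: computes_def)
next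
  fix k assume "k \<in> vars (compose N \<psi> \<phi>)"
  then obtain j i where "j \<in> vars \<psi>" "i \<in> vars \<phi>" "k = j * N + i"
    using vars_subst unfolding compose_def
    by (fastforce simp: vars_shift vars_dual split: if_splits)
  with f g have "j + 1 \<le> n" "i < N" "k = j * N + i"
    by (auto simp: computes_def)
  then have "k < (j + 1) * N" by simp
  also have "\<dots> \<le> n * N" using \<open>j + 1 \<le> n\<close> by (rule mult_le_mono1)
  finally show "k < n * N" .
qed

lemma formula_size_le:
  assumes "computes N \<phi> f"
  shows "formula_size N f \<le> leaves \<phi>"
  unfolding formula_size_def using assms by (intro Least_le) blast

lemma computes_iter:
  assumes "computes n \<psi> f"
  shows "\<exists>\<phi>. computes (n ^ Suc d) \<phi> (iter f n (Suc d)) \<and> leaves \<phi> = leaves \<psi> ^ Suc d"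
proof (induction d)
  case 0
  show ?case using assms by auto
next
  case (Suc d)
  then obtain \<phi> where "computes (n ^ Suc d) \<phi> (iter f n (Suc d))"
    and "leaves \<phi> = leaves \<psi> ^ Suc d" by blast
  with assms show ?case
    by (intro exI[of _ "compose (n ^ Suc d) \<psi> \<phi>"])
      (auto dest: computes_compose simp: leaves_compose)
qed

lemma formula_size_iter_le:
  assumes "computes n \<psi> f" and "d \<ge> 1"
  shows "formula_size (n ^ d) (iter f n d) \<le> leaves \<psi> ^ d"
proof -
  obtain e where "d = Suc e" using \<open>d \<ge> 1\<close> by (cases d) auto
  then show ?thesis
    using computes_iter[OF assms(1), of e] formula_size_le by metis
qed

definition funA_formula :: formula where
  "funA_formula = Or (And (Lit 0 True) (And (Lit 1 True) (Lit 2 True)))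
     (And (Or (Lit 0 False) (Lit 3 False))
          (Or (And (Lit 2 True) (Lit 3 True))
              (And (Lit 2 False) (Or (Lit 0 True) (Lit 1 False)))))"

lemma computes_funA_formula: "computes 4 funA_formula funA"
  unfolding computes_def funA_formula_def funA_def
  by auto

lemma leaves_funA_formula: "leaves funA_formula = 10"
  unfolding funA_formula_def by simp

theorem mainTheorem17:
  fixes d :: nat
  assumes "d \<ge> 1"
  shows "formula_size (4 ^ d) (iter funA 4 d) \<le> 10 ^ d"
  using formula_size_iter_le[OF computes_funA_formula assms] by (simp add: leaves_funA_formula)

end
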